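(* Let $\mathcal{A}$ be a unital $A_\infty$ pre-category, $(A_1,A_2,A_3)$ a transversal triple, and $e_{1,2}\in\mathrm{Mor}(A_1,A_2)$, $e_{2,3}\in\mathrm{Mor}(A_2,A_3)$ quasi-isomorphisms. Then $e_{1,3}=m_2(e_{2,3},e_{1,2})\in\mathrm{Mor}(A_1,A_3)$ is a quasi-isomorphism.
   Context: An $A_\infty$ pre-category consists of a set of objects; for each $k\ge1$ a set of transversal $k$-tuples, such that forgetting entries of a transversal tuple yields a transversal tuple; for each transversal pair $(A,B)$ a $\mathbb{Z}/2$-graded vector space $\mathrm{Mor}(A,B)$; and for each transversal $(A_0,\dots,A_n)$ maps $m_n:\mathrm{Mor}(A_{n-1},A_n)\otimes\cdots\otimes\mathrm{Mor}(A_0,A_1)\to\mathrm{Mor}(A_0,A_n)$ satisfying the $A_\infty$ equations $\sum(-1)^{\maltese_d}m(\dots,m(\dots),\dots)=0$ with $\maltese_d=d+\sum_{i\le d}\deg$. An element $f\in\mathrm{Mor}(A,A')$ with $m_1(f)=0$ is a quasi-isomorphism if $m_2(\cdot,f):\mathrm{Mor}(A',B')\to\mathrm{Mor}(A,B')$ and $m_2(f,\cdot):\mathrm{Mor}(B,A)\to\mathrm{Mor}(B,A')$ induce isomorphisms on $m_1$-homology whenever $(A,A',B')$, resp. $(B,A,A')$, is transversal. The pre-category is unital if for every object $A$ and finite collection of transversal sequences $S_i$ there are objects $A^+,A^-$ quasi-isomorphic to $A$ with all $(A^-,S_i,A^+)$ transversal. *)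

theory Defs
  imports Complex_Main "HOL-Library.Sublist"
begin

text \<open>Data of an A-infinity pre-category.
  trans: the transversal tuples (as lists of objects).
  morh A B d: the degree-d part (d = 0 or 1) of the Z/2-graded space Mor(A,B).
  mu os xs: for os = [A0,...,An] and xs = [a1,...,an] with ai in Mor(A(i-1),Ai),
    mu os xs is m_n(an,...,a1) in Mor(A0,An)  (arguments listed in reversed order).
  scl: scalar multiplication of the ground field.\<close>

record ('o, 'k, 'm) ainf_pre =
  trans :: "'o list \<Rightarrow> bool"
  morh  :: "'o \<Rightarrow> 'o \<Rightarrow> nat \<Rightarrow> 'm set"
  mu    :: "'o list \<Rightarrow> 'm list \<Rightarrow> 'm"
  scl   :: "'k \<Rightarrow> 'm \<Rightarrow> 'm"

definition mor :: "('o, 'k, 'm::ab_group_add) ainf_pre \<Rightarrow> 'o \<Rightarrow> 'o \<Rightarrow> 'm set" where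
  "mor C A B = {x + y | x y. x \<in> morh C A B 0 \<and> y \<in> morh C A B 1}"

definition ainf_precat :: "('o, 'k::field, 'm::ab_group_add) ainf_pre \<Rightarrow> bool" where
  "ainf_precat C \<longleftrightarrow>
     vector_space (scl C) \<and>
     (\<forall>os. trans C os \<longrightarrow> os \<noteq> []) \<and>
     (\<forall>os ys. trans C os \<and> subseq ys os \<and> ys \<noteq> [] \<longrightarrow> trans C ys) \<and>
     (\<forall>A B. trans C [A, B] \<longrightarrow>
        (\<forall>d<2. module.subspace (scl C) (morh C A B d)) \<and>
        morh C A B 0 \<inter> morh C A B 1 = {0}) \<and>
     \<comment> \<open>m_n maps into Mor(A0,An)\<close>
     (\<forall>os xs. trans C os \<and> xs \<noteq> [] \<and> length os = length xs + 1 \<and>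
        (\<forall>i<length xs. xs ! i \<in> mor C (os ! i) (os ! Suc i))
        \<longrightarrow> mu C os xs \<in> mor C (hd os) (last os)) \<and>
     \<comment> \<open>m_n has degree n mod 2 (i.e. 2 - n)\<close>
     (\<forall>os xs ds. trans C os \<and> xs \<noteq> [] \<and> length os = length xs + 1 \<and>
        length ds = length xs \<and>
        (\<forall>i<length xs. ds ! i < 2 \<and> xs ! i \<in> morh C (os ! i) (os ! Suc i) (ds ! i))
        \<longrightarrow> mu C os xs \<in> morh C (hd os) (last os) ((length xs + sum_list ds) mod 2)) \<and>
     \<comment> \<open>m_n is multilinear\<close>
     (\<forall>os xs j y z c. trans C os \<and> length os = length xs + 1 \<and> j < length xs \<and>
        (\<forall>i<length xs. i \<noteq> j \<longrightarrow> xs ! i \<in> mor C (os ! i) (os ! Suc i)) \<and>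
        y \<in> mor C (os ! j) (os ! Suc j) \<and> z \<in> mor C (os ! j) (os ! Suc j)
        \<longrightarrow> mu C os (xs[j := y + z]) = mu C os (xs[j := y]) + mu C os (xs[j := z]) \<and>
            mu C os (xs[j := scl C c y]) = scl C c (mu C os (xs[j := y]))) \<and>
     \<comment> \<open>A-infinity equations, on homogeneous inputs\<close>
     (\<forall>os xs ds. trans C os \<and> xs \<noteq> [] \<and> length os = length xs + 1 \<and>
        length ds = length xs \<and>
        (\<forall>i<length xs. ds ! i < 2 \<and> xs ! i \<in> morh C (os ! i) (os ! Suc i) (ds ! i))
        \<longrightarrow> (\<Sum>d<length xs. \<Sum>k\<in>{1..length xs - d}.
               scl C ((-1::'k) ^ (d + sum_list (take d ds)))
                 (mu C (take (Suc d) os @ drop (d + k) os)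
                    (take d xs @ [mu C (take (Suc k) (drop d os)) (take k (drop d xs))]
                       @ drop (d + k) xs))) = 0)"

definition cycles :: "('o, 'k, 'm::ab_group_add) ainf_pre \<Rightarrow> 'o \<Rightarrow> 'o \<Rightarrow> 'm set" where
  "cycles C A B = {x \<in> mor C A B. mu C [A, B] [x] = 0}"

definition bounds :: "('o, 'k, 'm::ab_group_add) ainf_pre \<Rightarrow> 'o \<Rightarrow> 'o \<Rightarrow> 'm set" where
  "bounds C A B = (\<lambda>x. mu C [A, B] [x]) ` mor C A B"

definition hclass :: "('o, 'k, 'm::ab_group_add) ainf_pre \<Rightarrow> 'o \<Rightarrow> 'o \<Rightarrow> 'm \<Rightarrow> 'm set" where
  "hclass C A B x = {x + b | b. b \<in> bounds C A B}"

definition homology :: "('o, 'k, 'm::ab_group_add) ainf_pre \<Rightarrow> 'o \<Rightarrow> 'o \<Rightarrow> 'm set set" where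
  "homology C A B = hclass C A B ` cycles C A B"

definition induces_iso ::
  "('o, 'k, 'm::ab_group_add) ainf_pre \<Rightarrow> 'o \<Rightarrow> 'o \<Rightarrow> 'o \<Rightarrow> 'o \<Rightarrow> ('m \<Rightarrow> 'm) \<Rightarrow> bool" where
  "induces_iso C A B A' B' phi \<longleftrightarrow>
     phi ` cycles C A B \<subseteq> cycles C A' B' \<and>
     phi ` bounds C A B \<subseteq> bounds C A' B' \<and>
     bij_betw (\<lambda>c. hclass C A' B' (phi (SOME x. x \<in> c))) (homology C A B) (homology C A' B')"

definition quasi_iso :: "('o, 'k, 'm::ab_group_add) ainf_pre \<Rightarrow> 'o \<Rightarrow> 'o \<Rightarrow> 'm \<Rightarrow> bool" where
  "quasi_iso C A A' f \<longleftrightarrow>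
     trans C [A, A'] \<and> f \<in> mor C A A' \<and> mu C [A, A'] [f] = 0 \<and>
     (\<forall>B'. trans C [A, A', B'] \<longrightarrow>
        induces_iso C A' B' A B' (\<lambda>x. mu C [A, A', B'] [f, x])) \<and>
     (\<forall>B. trans C [B, A, A'] \<longrightarrow>
        induces_iso C B A B A' (\<lambda>x. mu C [B, A, A'] [x, f]))"

definition unital :: "('o, 'k, 'm::ab_group_add) ainf_pre \<Rightarrow> bool" where
  "unital C \<longleftrightarrow>
     (\<forall>A S. finite S \<and> (\<forall>s\<in>S. trans C s) \<longrightarrow>
        (\<exists>Am Ap. (\<exists>g. quasi_iso C Am A g) \<and> (\<exists>h. quasi_iso C A Ap h) \<and>
                 (\<forall>s\<in>S. trans C (Am # s @ [Ap]))))"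

end

theory Submission
  imports Defs
begin

text \<open>
  Multiplication by a cycle is a chain map, and the A-infinity relations for n = 2 and n = 3
  show that m2 is associative on homology up to the parity twist x0 + x1 \<mapsto> x0 - x1 of
  its first factor. Hence, when the test object X is transversal to all of A1, A2, A3,
  multiplication by e13 on Mor(A3, X) agrees on homology with multiplication by e23 followed
  by multiplication by the twisted e12, and is therefore an isomorphism. For an arbitrary test
  object B', unitality provides a quasi-isomorphism h from B' to an object A+ transversal to
  everything in sight. Associativity identifies "multiply by e13, then by h" with "multiply by
  h, then by the twisted e13", and the second map is known to be an isomorphism; two-out-of-three
  for isomorphisms on homology then settles B'. The other side is symmetric, using A-.
\<close>

lemma unitalE:
  assumes "unital C" and "trans C s1" and "trans C s2"
  obtains Am Ap g h where "quasi_iso C Am A g" and "quasi_iso C A Ap h"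
    and "trans C (Am # s1 @ [Ap])" and "trans C (Am # s2 @ [Ap])"
proof -
  have "finite {s1, s2} \<and> (\<forall>s\<in>{s1, s2}. trans C s)"
    using assms(2,3) by simp
  then have "\<exists>Am Ap. (\<exists>g. quasi_iso C Am A g) \<and> (\<exists>h. quasi_iso C A Ap h) \<and>
      (\<forall>s\<in>{s1, s2}. trans C (Am # s @ [Ap]))"
    by (rule assms(1)[unfolded unital_def, rule_format])
  then show thesis
    using that by auto
qed

locale ainf_precategory =
  fixes C :: "('o, 'k::field, 'm::ab_group_add) ainf_pre"
  assumes ainf_precat: "ainf_precat C"
begin

sublocale scl: module "scl C"
proof -
  have "vector_space (scl C)"
    using ainf_precat unfolding ainf_precat_def by blast
  then show "module (scl C)"
    by (simp add: vector_space_def module_def)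
qed

lemma trans_subseq: "trans C os \<Longrightarrow> subseq ys os \<Longrightarrow> ys \<noteq> [] \<Longrightarrow> trans C ys"
  using ainf_precat[unfolded ainf_precat_def, THEN conjunct2, THEN conjunct2, THEN conjunct1]
  by blast

lemma morh_subspace: "trans C [A, B] \<Longrightarrow> d < 2 \<Longrightarrow> scl.subspace (morh C A B d)"
  and morh_Int: "trans C [A, B] \<Longrightarrow> morh C A B 0 \<inter> morh C A B 1 = {0}"
  using ainf_precat[unfolded ainf_precat_def, THEN conjunct2, THEN conjunct2, THEN conjunct2,
      THEN conjunct1]
  by blast+

lemma mu_mor:
  "trans C os \<Longrightarrow> xs \<noteq> [] \<Longrightarrow> length os = length xs + 1 \<Longrightarrow>
    \<forall>i<length xs. xs ! i \<in> mor C (os ! i) (os ! Suc i) \<Longrightarrow>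
    mu C os xs \<in> mor C (hd os) (last os)"
  using ainf_precat[unfolded ainf_precat_def, THEN conjunct2, THEN conjunct2, THEN conjunct2,
      THEN conjunct2, THEN conjunct1]
  by blast

lemma mu_morh:
  "trans C os \<Longrightarrow> xs \<noteq> [] \<Longrightarrow> length os = length xs + 1 \<Longrightarrow> length ds = length xs \<Longrightarrow>
    \<forall>i<length xs. ds ! i < 2 \<and> xs ! i \<in> morh C (os ! i) (os ! Suc i) (ds ! i) \<Longrightarrow>
    mu C os xs \<in> morh C (hd os) (last os) ((length xs + sum_list ds) mod 2)"
  using ainf_precat[unfolded ainf_precat_def, THEN conjunct2, THEN conjunct2, THEN conjunct2,
      THEN conjunct2, THEN conjunct2, THEN conjunct1]
  by blast

lemma mu_update_linear:
  assumes "trans C os" and "length os = length xs + 1" and "j < length xs"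
    and "\<forall>i<length xs. i \<noteq> j \<longrightarrow> xs ! i \<in> mor C (os ! i) (os ! Suc i)"
    and "y \<in> mor C (os ! j) (os ! Suc j)" and "z \<in> mor C (os ! j) (os ! Suc j)"
  shows "mu C os (xs[j := y + z]) = mu C os (xs[j := y]) + mu C os (xs[j := z])"
    and "mu C os (xs[j := scl C c y]) = scl C c (mu C os (xs[j := y]))"
  using ainf_precat[unfolded ainf_precat_def, THEN conjunct2, THEN conjunct2, THEN conjunct2,
      THEN conjunct2, THEN conjunct2, THEN conjunct2, THEN conjunct1] assms
  by blast+

lemma ainf_relation:
  "trans C os \<Longrightarrow> xs \<noteq> [] \<Longrightarrow> length os = length xs + 1 \<Longrightarrow> length ds = length xs \<Longrightarrow>
    \<forall>i<length xs. ds ! i < 2 \<and> xs ! i \<in> morh C (os ! i) (os ! Suc i) (ds ! i) \<Longrightarrow>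
    (\<Sum>d<length xs. \<Sum>k\<in>{1..length xs - d}.
       scl C ((-1) ^ (d + sum_list (take d ds)))
         (mu C (take (Suc d) os @ drop (d + k) os)
            (take d xs @ [mu C (take (Suc k) (drop d os)) (take k (drop d xs))] @ drop (d + k) xs)))
    = 0"
  using ainf_precat[unfolded ainf_precat_def, THEN conjunct2, THEN conjunct2, THEN conjunct2,
      THEN conjunct2, THEN conjunct2, THEN conjunct2, THEN conjunct2]
  by blast

lemma trans3D:
  assumes "trans C [A, B, D]"
  shows "trans C [A, B]" and "trans C [B, D]" and "trans C [A, D]"
  using trans_subseq[OF assms, of "[A, B]"] trans_subseq[OF assms, of "[B, D]"]
    trans_subseq[OF assms, of "[A, D]"]
  by simp_all

lemma trans4D:
  assumes "trans C [A, B, D, E]"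
  shows "trans C [A, B, D]" and "trans C [A, B, E]" and "trans C [A, D, E]" and "trans C [B, D, E]"
  using trans_subseq[OF assms, of "[A, B, D]"] trans_subseq[OF assms, of "[A, B, E]"]
    trans_subseq[OF assms, of "[A, D, E]"] trans_subseq[OF assms, of "[B, D, E]"]
  by simp_all

lemma trans_tl: "trans C (A # os) \<Longrightarrow> os \<noteq> [] \<Longrightarrow> trans C os"
  by (erule trans_subseq) auto

lemma trans_butlast: "trans C (os @ [A]) \<Longrightarrow> os \<noteq> [] \<Longrightarrow> trans C os"
  by (erule trans_subseq) auto

lemma morh_zero: "trans C [A, B] \<Longrightarrow> d < 2 \<Longrightarrow> 0 \<in> morh C A B d"
  using morh_subspace scl.subspace_0 by blast

lemma morh_add:
  "trans C [A, B] \<Longrightarrow> d < 2 \<Longrightarrow> x \<in> morh C A B d \<Longrightarrow> y \<in> morh C A B d \<Longrightarrow> x + y \<in> morh C A B d"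
  using morh_subspace scl.subspace_add by blast

lemma morh_neg: "trans C [A, B] \<Longrightarrow> d < 2 \<Longrightarrow> x \<in> morh C A B d \<Longrightarrow> - x \<in> morh C A B d"
  using morh_subspace scl.subspace_neg by blast

lemma morh_diff:
  "trans C [A, B] \<Longrightarrow> d < 2 \<Longrightarrow> x \<in> morh C A B d \<Longrightarrow> y \<in> morh C A B d \<Longrightarrow> x - y \<in> morh C A B d"
  using morh_subspace scl.subspace_diff by blast

lemma morI: "x0 \<in> morh C A B 0 \<Longrightarrow> x1 \<in> morh C A B 1 \<Longrightarrow> x0 + x1 \<in> mor C A B"
  unfolding mor_def by blast

lemma morE:
  assumes "x \<in> mor C A B"
  obtains x0 x1 where "x0 \<in> morh C A B 0" and "x1 \<in> morh C A B 1" and "x = x0 + x1"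
  using assms unfolding mor_def by blast

lemma morh_imp_mor: "trans C [A, B] \<Longrightarrow> d < 2 \<Longrightarrow> x \<in> morh C A B d \<Longrightarrow> x \<in> mor C A B"
  using morI[of x A B 0] morI[of 0 A B x] morh_zero[of A B] by (auto simp: less_2_cases_iff)

lemma mor_zero: "trans C [A, B] \<Longrightarrow> 0 \<in> mor C A B"
  using morh_imp_mor[of A B 0 0] morh_zero[of A B 0] by simp

lemma mor_add:
  assumes "trans C [A, B]" and "x \<in> mor C A B" and "y \<in> mor C A B"
  shows "x + y \<in> mor C A B"
proof -
  obtain x0 x1 where x: "x0 \<in> morh C A B 0" "x1 \<in> morh C A B 1" "x = x0 + x1"
    using assms(2) by (rule morE)
  obtain y0 y1 where y: "y0 \<in> morh C A B 0" "y1 \<in> morh C A B 1" "y = y0 + y1"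
    using assms(3) by (rule morE)
  have "(x0 + y0) + (x1 + y1) \<in> mor C A B"
    using x y by (auto intro!: morI morh_add[OF assms(1)])
  then show ?thesis
    using x(3) y(3) by (simp add: ac_simps)
qed

lemma mor_neg:
  assumes "trans C [A, B]" and "x \<in> mor C A B"
  shows "- x \<in> mor C A B"
proof -
  obtain x0 x1 where x: "x0 \<in> morh C A B 0" "x1 \<in> morh C A B 1" "x = x0 + x1"
    using assms(2) by (rule morE)
  have "(- x0) + (- x1) \<in> mor C A B"
    by (rule morI) (use x morh_neg[OF assms(1)] in auto)
  then show ?thesis
    using x(3) by (simp add: ac_simps)
qed

lemma mor_diff: "trans C [A, B] \<Longrightarrow> x \<in> mor C A B \<Longrightarrow> y \<in> mor C A B \<Longrightarrow> x - y \<in> mor C A B"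
  using mor_add[of A B x "- y"] mor_neg[of A B y] by simp

lemma morh_decomp_unique:
  assumes "trans C [A, B]"
    and "x0 \<in> morh C A B 0" "y0 \<in> morh C A B 0" "x1 \<in> morh C A B 1" "y1 \<in> morh C A B 1"
    and "x0 + x1 = y0 + y1"
  shows "x0 = y0" and "x1 = y1"
proof -
  have diff: "x0 - y0 = y1 - x1"
    using assms(6) by (simp add: algebra_simps)
  moreover have "x0 - y0 \<in> morh C A B 0" and "y1 - x1 \<in> morh C A B 1"
    using assms(2-5) by (simp_all add: morh_diff[OF assms(1)])
  ultimately have "x0 - y0 \<in> morh C A B 0 \<inter> morh C A B 1"
    by simp
  then have "x0 - y0 = 0"
    unfolding morh_Int[OF assms(1)] by simp
  then show "x0 = y0" and "x1 = y1"
    using diff by simp_all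
qed

lemma mor_induct [consumes 2, case_names homogeneous add]:
  assumes "x \<in> mor C A B" and "trans C [A, B]"
    and homogeneous: "\<And>x d. d < 2 \<Longrightarrow> x \<in> morh C A B d \<Longrightarrow> P x"
    and add: "\<And>x y. x \<in> mor C A B \<Longrightarrow> y \<in> mor C A B \<Longrightarrow> P x \<Longrightarrow> P y \<Longrightarrow> P (x + y)"
  shows "P x"
proof -
  obtain x0 x1 where x: "x0 \<in> morh C A B 0" "x1 \<in> morh C A B 1" "x = x0 + x1"
    using assms(1) by (rule morE)
  have "P (x0 + x1)"
  proof (rule add)
    show "x0 \<in> mor C A B" and "x1 \<in> mor C A B"
      using morh_imp_mor[OF assms(2), of 0 x0] morh_imp_mor[OF assms(2), of 1 x1] x by simp_all
    show "P x0" and "P x1"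
      using homogeneous[of 0 x0] homogeneous[of 1 x1] x by simp_all
  qed
  then show ?thesis
    using x(3) by simp
qed

lemma mu_update_zero:
  assumes "trans C os" and "length os = length xs + 1" and "j < length xs"
    and "\<forall>i<length xs. xs ! i \<in> mor C (os ! i) (os ! Suc i)"
  shows "mu C os (xs[j := 0]) = 0"
proof -
  have "mu C os (xs[j := scl C 0 (xs ! j)]) = scl C 0 (mu C os (xs[j := xs ! j]))"
    using assms by (intro mu_update_linear(2)[where z = "xs ! j"]) auto
  then show ?thesis
    by simp
qed

lemma mu_update_neg:
  assumes "trans C os" and "length os = length xs + 1" and "j < length xs"
    and "\<forall>i<length xs. xs ! i \<in> mor C (os ! i) (os ! Suc i)"
  shows "mu C os (xs[j := - (xs ! j)]) = - mu C os xs"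
proof -
  have "mu C os (xs[j := scl C (-1) (xs ! j)]) = scl C (-1) (mu C os (xs[j := xs ! j]))"
    using assms by (intro mu_update_linear(2)[where z = "xs ! j"]) auto
  then show ?thesis
    by simp
qed

abbreviation m1 :: "'o \<Rightarrow> 'o \<Rightarrow> 'm \<Rightarrow> 'm" where
  "m1 A B x \<equiv> mu C [A, B] [x]"

abbreviation m2 :: "'o \<Rightarrow> 'o \<Rightarrow> 'o \<Rightarrow> 'm \<Rightarrow> 'm \<Rightarrow> 'm" where
  "m2 A B D x y \<equiv> mu C [A, B, D] [x, y]"

abbreviation m3 :: "'o \<Rightarrow> 'o \<Rightarrow> 'o \<Rightarrow> 'o \<Rightarrow> 'm \<Rightarrow> 'm \<Rightarrow> 'm \<Rightarrow> 'm" where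
  "m3 A B D E x y z \<equiv> mu C [A, B, D, E] [x, y, z]"

lemma m1_mor: "trans C [A, B] \<Longrightarrow> x \<in> mor C A B \<Longrightarrow> m1 A B x \<in> mor C A B"
  using mu_mor[of "[A, B]" "[x]"] by simp

lemma m2_mor:
  "trans C [A, B, D] \<Longrightarrow> x \<in> mor C A B \<Longrightarrow> y \<in> mor C B D \<Longrightarrow> m2 A B D x y \<in> mor C A D"
  using mu_mor[of "[A, B, D]" "[x, y]"] by (simp add: All_less_Suc)

lemma m3_mor:
  "trans C [A, B, D, E] \<Longrightarrow> x \<in> mor C A B \<Longrightarrow> y \<in> mor C B D \<Longrightarrow> z \<in> mor C D E \<Longrightarrow>
    m3 A B D E x y z \<in> mor C A E"
  using mu_mor[of "[A, B, D, E]" "[x, y, z]"] by (simp add: All_less_Suc)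

lemma m1_morh:
  "trans C [A, B] \<Longrightarrow> d < 2 \<Longrightarrow> x \<in> morh C A B d \<Longrightarrow> m1 A B x \<in> morh C A B (Suc d mod 2)"
  using mu_morh[of "[A, B]" "[x]" "[d]"] by simp

lemma m2_morh:
  "trans C [A, B, D] \<Longrightarrow> d < 2 \<Longrightarrow> e < 2 \<Longrightarrow> x \<in> morh C A B d \<Longrightarrow> y \<in> morh C B D e \<Longrightarrow>
    m2 A B D x y \<in> morh C A D ((d + e) mod 2)"
  using mu_morh[of "[A, B, D]" "[x, y]" "[d, e]"] by (simp add: All_less_Suc)

lemma m1_add:
  "trans C [A, B] \<Longrightarrow> x \<in> mor C A B \<Longrightarrow> y \<in> mor C A B \<Longrightarrow> m1 A B (x + y) = m1 A B x + m1 A B y"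
  using mu_update_linear(1)[of "[A, B]" "[x]" 0 x y] by simp

lemma m1_neg: "trans C [A, B] \<Longrightarrow> x \<in> mor C A B \<Longrightarrow> m1 A B (- x) = - m1 A B x"
  using mu_update_neg[of "[A, B]" "[x]" 0] by simp

lemma m1_zero: "trans C [A, B] \<Longrightarrow> m1 A B 0 = 0"
  using mu_update_zero[of "[A, B]" "[0]" 0] mor_zero[of A B] by simp

lemma m2_add_left:
  "trans C [A, B, D] \<Longrightarrow> x \<in> mor C A B \<Longrightarrow> x' \<in> mor C A B \<Longrightarrow> y \<in> mor C B D \<Longrightarrow>
    m2 A B D (x + x') y = m2 A B D x y + m2 A B D x' y"
  using mu_update_linear(1)[of "[A, B, D]" "[x, y]" 0 x x'] by (simp add: All_less_Suc)

lemma m2_add_right: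
  "trans C [A, B, D] \<Longrightarrow> x \<in> mor C A B \<Longrightarrow> y \<in> mor C B D \<Longrightarrow> y' \<in> mor C B D \<Longrightarrow>
    m2 A B D x (y + y') = m2 A B D x y + m2 A B D x y'"
  using mu_update_linear(1)[of "[A, B, D]" "[x, y]" 1 y y'] by (simp add: All_less_Suc)

lemma m2_neg_left:
  "trans C [A, B, D] \<Longrightarrow> x \<in> mor C A B \<Longrightarrow> y \<in> mor C B D \<Longrightarrow> m2 A B D (- x) y = - m2 A B D x y"
  using mu_update_neg[of "[A, B, D]" "[x, y]" 0] by (simp add: All_less_Suc)

lemma m2_neg_right:
  "trans C [A, B, D] \<Longrightarrow> x \<in> mor C A B \<Longrightarrow> y \<in> mor C B D \<Longrightarrow> m2 A B D x (- y) = - m2 A B D x y"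
  using mu_update_neg[of "[A, B, D]" "[x, y]" 1] by (simp add: All_less_Suc)

lemma m2_zero_left: "trans C [A, B, D] \<Longrightarrow> y \<in> mor C B D \<Longrightarrow> m2 A B D 0 y = 0"
  using mu_update_zero[of "[A, B, D]" "[0, y]" 0] mor_zero[OF trans3D(1)] by (simp add: All_less_Suc)

lemma m2_zero_right: "trans C [A, B, D] \<Longrightarrow> x \<in> mor C A B \<Longrightarrow> m2 A B D x 0 = 0"
  using mu_update_zero[of "[A, B, D]" "[x, 0]" 1] mor_zero[OF trans3D(2)] by (simp add: All_less_Suc)

lemma m2_diff_left:
  "trans C [A, B, D] \<Longrightarrow> x \<in> mor C A B \<Longrightarrow> x' \<in> mor C A B \<Longrightarrow> y \<in> mor C B D \<Longrightarrow>
    m2 A B D (x - x') y = m2 A B D x y - m2 A B D x' y"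
  using m2_add_left[of A B D x "- x'" y] m2_neg_left[of A B D x' y] mor_neg[OF trans3D(1), of A B D x']
  by simp

lemma m2_diff_right:
  "trans C [A, B, D] \<Longrightarrow> x \<in> mor C A B \<Longrightarrow> y \<in> mor C B D \<Longrightarrow> y' \<in> mor C B D \<Longrightarrow>
    m2 A B D x (y - y') = m2 A B D x y - m2 A B D x y'"
  using m2_add_right[of A B D x y "- y'"] m2_neg_right[of A B D x y'] mor_neg[OF trans3D(2), of A B D y']
  by simp

lemma m3_zero:
  assumes "trans C [A, B, D, E]" and "x \<in> mor C A B" "y \<in> mor C B D" "z \<in> mor C D E"
  shows "m3 A B D E 0 y z = 0" and "m3 A B D E x 0 z = 0" and "m3 A B D E x y 0 = 0"
  using mu_update_zero[OF assms(1), of "[x, y, z]" 0] mu_update_zero[OF assms(1), of "[x, y, z]" 1]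
    mu_update_zero[OF assms(1), of "[x, y, z]" 2] assms(2-4)
  by (simp_all add: All_less_Suc numeral_2_eq_2)

lemma ainf_relation_1:
  assumes "trans C [A, B]" and "x \<in> morh C A B d" and "d < 2"
  shows "m1 A B (m1 A B x) = 0"
  using ainf_relation[of "[A, B]" "[x]" "[d]"] assms by simp

lemma ainf_relation_2:
  assumes "trans C [A, B, D]" and "x \<in> morh C A B d" "d < 2" and "y \<in> morh C B D e" "e < 2"
  shows "m2 A B D (m1 A B x) y + m1 A D (m2 A B D x y)
    + scl C ((-1) ^ (1 + d)) (m2 A B D x (m1 B D y)) = 0"
proof -
  have homogeneous: "\<forall>i<length [x, y]. [d, e] ! i < 2 \<and>
      [x, y] ! i \<in> morh C ([A, B, D] ! i) ([A, B, D] ! Suc i) ([d, e] ! i)"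
    using assms by (simp add: All_less_Suc)
  have "(\<Sum>i<length [x, y]. \<Sum>k\<in>{1..length [x, y] - i}.
      scl C ((-1) ^ (i + sum_list (take i [d, e])))
        (mu C (take (Suc i) [A, B, D] @ drop (i + k) [A, B, D])
          (take i [x, y] @ [mu C (take (Suc k) (drop i [A, B, D])) (take k (drop i [x, y]))]
            @ drop (i + k) [x, y]))) = 0"
    by (rule ainf_relation[OF assms(1) _ _ _ homogeneous]) auto
  moreover have "{..<length [x, y]} = {0, 1}" and "{1..length [x, y] - 0} = {1, 2}"
    and "{1..length [x, y] - 1} = {1}"
    by auto
  ultimately show ?thesis
    by (simp add: numeral_2_eq_2)
qed

lemma ainf_relation_3:
  assumes "trans C [A, B, D, E]"
    and "x \<in> morh C A B d" "d < 2" and "y \<in> morh C B D e" "e < 2" and "z \<in> morh C D E f" "f < 2"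
  shows "m3 A B D E (m1 A B x) y z + m2 A D E (m2 A B D x y) z + m1 A E (m3 A B D E x y z)
    + scl C ((-1) ^ (1 + d)) (m3 A B D E x (m1 B D y) z)
    + scl C ((-1) ^ (1 + d)) (m2 A B E x (m2 B D E y z))
    + scl C ((-1) ^ (2 + d + e)) (m3 A B D E x y (m1 D E z)) = 0"
proof -
  have homogeneous: "\<forall>i<length [x, y, z]. [d, e, f] ! i < 2 \<and>
      [x, y, z] ! i \<in> morh C ([A, B, D, E] ! i) ([A, B, D, E] ! Suc i) ([d, e, f] ! i)"
    using assms by (simp add: All_less_Suc)
  have "(\<Sum>i<length [x, y, z]. \<Sum>k\<in>{1..length [x, y, z] - i}.
      scl C ((-1) ^ (i + sum_list (take i [d, e, f])))
        (mu C (take (Suc i) [A, B, D, E] @ drop (i + k) [A, B, D, E])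
          (take i [x, y, z] @ [mu C (take (Suc k) (drop i [A, B, D, E])) (take k (drop i [x, y, z]))]
            @ drop (i + k) [x, y, z]))) = 0"
    by (rule ainf_relation[OF assms(1) _ _ _ homogeneous]) auto
  moreover have "{..<length [x, y, z]} = {0, 1, 2}" and "{1..length [x, y, z] - 0} = {1, 2, 3}"
    and "{1..length [x, y, z] - 1} = {1, 2}" and "{1..length [x, y, z] - 2} = {1}"
    by auto
  ultimately show ?thesis
    by (simp add: numeral_2_eq_2 numeral_3_eq_3) (simp add: algebra_simps)
qed

definition twist :: "'o \<Rightarrow> 'o \<Rightarrow> 'm \<Rightarrow> 'm" where
  "twist A B x =
    (THE y. \<exists>x0 x1. x0 \<in> morh C A B 0 \<and> x1 \<in> morh C A B 1 \<and> x = x0 + x1 \<and> y = x0 - x1)"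

lemma twist_decomp:
  assumes "trans C [A, B]" and "x0 \<in> morh C A B 0" and "x1 \<in> morh C A B 1"
  shows "twist A B (x0 + x1) = x0 - x1"
  unfolding twist_def
proof (rule the_equality)
  show "\<exists>y0 y1. y0 \<in> morh C A B 0 \<and> y1 \<in> morh C A B 1 \<and> x0 + x1 = y0 + y1 \<and> x0 - x1 = y0 - y1"
    using assms(2,3) by blast
next
  fix y
  assume "\<exists>y0 y1. y0 \<in> morh C A B 0 \<and> y1 \<in> morh C A B 1 \<and> x0 + x1 = y0 + y1 \<and> y = y0 - y1"
  then obtain y0 y1 where y: "y0 \<in> morh C A B 0" "y1 \<in> morh C A B 1" "x0 + x1 = y0 + y1"
    and "y = y0 - y1"
    by blast
  then show "y = x0 - x1"
    using morh_decomp_unique[OF assms(1,2) y(1) assms(3) y(2,3)] by simp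
qed

lemma twist_morh:
  assumes "trans C [A, B]" and "d < 2" and "x \<in> morh C A B d"
  shows "twist A B x = (if d = 0 then x else - x)"
  using twist_decomp[OF assms(1), of x 0] twist_decomp[OF assms(1), of 0 x]
    morh_zero[OF assms(1)] assms(2,3)
  by (auto simp: less_2_cases_iff)

lemma twist_zero: "trans C [A, B] \<Longrightarrow> twist A B 0 = 0"
  using twist_morh[of A B 0 0] morh_zero[of A B 0] by simp

lemma twist_add:
  assumes "trans C [A, B]" and "x \<in> mor C A B" and "y \<in> mor C A B"
  shows "twist A B (x + y) = twist A B x + twist A B y"
proof -
  obtain x0 x1 where x: "x0 \<in> morh C A B 0" "x1 \<in> morh C A B 1" "x = x0 + x1"
    using assms(2) by (rule morE)
  obtain y0 y1 where y: "y0 \<in> morh C A B 0" "y1 \<in> morh C A B 1" "y = y0 + y1"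
    using assms(3) by (rule morE)
  have sum: "x + y = (x0 + y0) + (x1 + y1)"
    using x(3) y(3) by (simp add: ac_simps)
  have "twist A B (x + y) = (x0 + y0) - (x1 + y1)"
    unfolding sum by (rule twist_decomp[OF assms(1)]) (use x y morh_add[OF assms(1)] in auto)
  also have "\<dots> = (x0 - x1) + (y0 - y1)"
    by (simp add: algebra_simps)
  also have "\<dots> = twist A B x + twist A B y"
    using twist_decomp[OF assms(1) x(1,2)] twist_decomp[OF assms(1) y(1,2)] x(3) y(3) by simp
  finally show ?thesis .
qed

lemma twist_mor:
  assumes "trans C [A, B]" and "x \<in> mor C A B"
  shows "twist A B x \<in> mor C A B"
proof -
  obtain x0 x1 where x: "x0 \<in> morh C A B 0" "x1 \<in> morh C A B 1" "x = x0 + x1"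
    using assms(2) by (rule morE)
  have "x0 + (- x1) \<in> mor C A B"
    by (rule morI) (use x morh_neg[OF assms(1)] in auto)
  then show ?thesis
    using twist_decomp[OF assms(1) x(1,2)] x(3) by simp
qed

lemma twist_twist:
  assumes "trans C [A, B]" and "x \<in> mor C A B"
  shows "twist A B (twist A B x) = x"
proof -
  obtain x0 x1 where x: "x0 \<in> morh C A B 0" "x1 \<in> morh C A B 1" "x = x0 + x1"
    using assms(2) by (rule morE)
  have "- x1 \<in> morh C A B 1"
    using morh_neg[OF assms(1) _ x(2)] by simp
  then have "twist A B (x0 + - x1) = x0 - - x1"
    by (rule twist_decomp[OF assms(1) x(1)])
  then show ?thesis
    using twist_decomp[OF assms(1) x(1,2)] x(3) by simp
qed

lemma twist_diff:
  assumes "trans C [A, B]" and "x \<in> mor C A B" and "y \<in> mor C A B"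
  shows "twist A B (x - y) = twist A B x - twist A B y"
  using twist_add[OF assms(1) mor_diff[OF assms] assms(3)] by (simp add: algebra_simps)

lemma twist_m1:
  assumes "x \<in> mor C A B" and "trans C [A, B]"
  shows "m1 A B (twist A B x) = - twist A B (m1 A B x)"
  using assms
proof (induction rule: mor_induct)
  case (homogeneous x d)
  have m1x: "m1 A B x \<in> morh C A B (Suc d mod 2)"
    by (rule m1_morh[OF assms(2) homogeneous])
  have "m1 A B (- x) = - m1 A B x"
    by (rule m1_neg[OF assms(2) morh_imp_mor[OF assms(2) homogeneous]])
  then show ?case
    using twist_morh[OF assms(2) homogeneous] twist_morh[OF assms(2) _ m1x] homogeneous(1)
    by (auto simp: less_2_cases_iff)
next
  case (add x y)
  then show ?case
    using assms(2) by (simp add: m1_add m1_mor twist_add twist_mor)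
qed

lemma twist_m2:
  assumes "trans C [A, B, D]" and "x \<in> mor C A B" and "y \<in> mor C B D"
  shows "twist A D (m2 A B D x y) = m2 A B D (twist A B x) (twist B D y)"
proof -
  have AB: "trans C [A, B]" and BD: "trans C [B, D]" and AD: "trans C [A, D]"
    using trans3D[OF assms(1)] by simp_all
  show ?thesis
    using assms(2) AB
  proof (induction rule: mor_induct)
    case (homogeneous x d)
    note x = homogeneous
    have xm: "x \<in> mor C A B"
      by (rule morh_imp_mor[OF AB x])
    show ?case
      using assms(3) BD
    proof (induction rule: mor_induct)
      case (homogeneous y e)
      have ym: "y \<in> mor C B D"
        by (rule morh_imp_mor[OF BD homogeneous])
      have "m2 A B D x y \<in> morh C A D ((d + e) mod 2)"
        by (rule m2_morh[OF assms(1) x(1) homogeneous(1) x(2) homogeneous(2)])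
      then have "twist A D (m2 A B D x y) = (if (d + e) mod 2 = 0 then m2 A B D x y else - m2 A B D x y)"
        using twist_morh[OF AD] by simp
      moreover have "m2 A B D (- x) y = - m2 A B D x y" and "m2 A B D x (- y) = - m2 A B D x y"
        and "m2 A B D (- x) (- y) = m2 A B D x y"
        using m2_neg_left[OF assms(1) xm] m2_neg_right[OF assms(1) xm ym] mor_neg[OF BD ym] ym
        by simp_all
      ultimately show ?case
        using twist_morh[OF AB x] twist_morh[OF BD homogeneous] x(1) homogeneous(1)
        by (auto simp: less_2_cases_iff)
    next
      case (add y y')
      then show ?case
        using assms(1) AB BD AD xm by (simp add: m2_add_right twist_add twist_mor m2_mor)
    qed
  next
    case (add x x')
    then show ?case
      using assms(1,3) AB BD AD by (simp add: m2_add_left twist_add twist_mor m2_mor)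
  qed
qed

lemma m1_m1:
  assumes "x \<in> mor C A B" and "trans C [A, B]"
  shows "m1 A B (m1 A B x) = 0"
  using assms
proof (induction rule: mor_induct)
  case (homogeneous x d)
  then show ?case
    by (intro ainf_relation_1[OF assms(2)])
next
  case (add x y)
  then show ?case
    using assms(2) by (simp add: m1_add m1_mor)
qed

lemma cycles_mor: "x \<in> cycles C A B \<Longrightarrow> x \<in> mor C A B"
  unfolding cycles_def by simp

lemma cycles_zero: "trans C [A, B] \<Longrightarrow> 0 \<in> cycles C A B"
  by (simp add: cycles_def mor_zero m1_zero)

lemma cycles_add: "trans C [A, B] \<Longrightarrow> x \<in> cycles C A B \<Longrightarrow> y \<in> cycles C A B \<Longrightarrow> x + y \<in> cycles C A B"
  by (simp add: cycles_def mor_add m1_add)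

lemma cycles_neg: "trans C [A, B] \<Longrightarrow> x \<in> cycles C A B \<Longrightarrow> - x \<in> cycles C A B"
  by (simp add: cycles_def mor_neg m1_neg)

lemma cycles_diff: "trans C [A, B] \<Longrightarrow> x \<in> cycles C A B \<Longrightarrow> y \<in> cycles C A B \<Longrightarrow> x - y \<in> cycles C A B"
  using cycles_add[of A B x "- y"] cycles_neg[of A B y] by simp

lemma boundsI: "x \<in> mor C A B \<Longrightarrow> m1 A B x \<in> bounds C A B"
  unfolding bounds_def by blast

lemma boundsE:
  assumes "b \<in> bounds C A B"
  obtains x where "x \<in> mor C A B" and "b = m1 A B x"
  using assms unfolding bounds_def by blast

lemma bounds_cycles: "trans C [A, B] \<Longrightarrow> b \<in> bounds C A B \<Longrightarrow> b \<in> cycles C A B"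
  by (elim boundsE) (simp add: cycles_def m1_mor m1_m1)

lemma bounds_zero: "trans C [A, B] \<Longrightarrow> 0 \<in> bounds C A B"
  using boundsI[OF mor_zero, of A B] m1_zero[of A B] by simp

lemma bounds_add:
  assumes "trans C [A, B]" and "b \<in> bounds C A B" and "b' \<in> bounds C A B"
  shows "b + b' \<in> bounds C A B"
proof -
  obtain x where x: "x \<in> mor C A B" "b = m1 A B x"
    using assms(2) by (rule boundsE)
  obtain x' where x': "x' \<in> mor C A B" "b' = m1 A B x'"
    using assms(3) by (rule boundsE)
  show ?thesis
    using boundsI[OF mor_add[OF assms(1) x(1) x'(1)]] m1_add[OF assms(1) x(1) x'(1)] x x' by simp
qed

lemma bounds_neg:
  assumes "trans C [A, B]" and "b \<in> bounds C A B"
  shows "- b \<in> bounds C A B"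
proof -
  obtain x where x: "x \<in> mor C A B" "b = m1 A B x"
    using assms(2) by (rule boundsE)
  show ?thesis
    using boundsI[OF mor_neg[OF assms(1) x(1)]] m1_neg[OF assms(1) x(1)] x by simp
qed

lemma bounds_diff: "trans C [A, B] \<Longrightarrow> b \<in> bounds C A B \<Longrightarrow> b' \<in> bounds C A B \<Longrightarrow> b - b' \<in> bounds C A B"
  using bounds_add[of A B b "- b'"] bounds_neg[of A B b'] by simp

lemma bounds_diff_commute: "trans C [A, B] \<Longrightarrow> x - y \<in> bounds C A B \<Longrightarrow> y - x \<in> bounds C A B"
  using bounds_neg[of A B "x - y"] by simp

lemma bounds_add_diff:
  assumes "trans C [A, B]" and "x - y \<in> bounds C A B" and "x' - y' \<in> bounds C A B"
  shows "(x + x') - (y + y') \<in> bounds C A B"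
proof -
  have "(x + x') - (y + y') = (x - y) + (x' - y')"
    by (simp add: algebra_simps)
  then show ?thesis
    using bounds_add[OF assms] by (simp only:)
qed

lemma cycles_decomp:
  assumes "trans C [A, B]" and "x \<in> cycles C A B"
  obtains x0 x1 where "x0 \<in> morh C A B 0" and "x1 \<in> morh C A B 1" and "x = x0 + x1"
    and "x0 \<in> cycles C A B" and "x1 \<in> cycles C A B"
proof -
  obtain x0 x1 where x: "x0 \<in> morh C A B 0" "x1 \<in> morh C A B 1" "x = x0 + x1"
    using cycles_mor[OF assms(2)] by (rule morE)
  have x0: "x0 \<in> mor C A B" and x1: "x1 \<in> mor C A B"
    using morh_imp_mor[OF assms(1), of 0 x0] morh_imp_mor[OF assms(1), of 1 x1] x by simp_all
  have odd0: "m1 A B x0 \<in> morh C A B 1" and even1: "m1 A B x1 \<in> morh C A B 0"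
    using m1_morh[OF assms(1) _ x(1)] m1_morh[OF assms(1) _ x(2)] by simp_all
  have sum: "m1 A B x0 + m1 A B x1 = 0"
    using assms(2) x(3) m1_add[OF assms(1) x0 x1] by (simp add: cycles_def)
  then have "m1 A B x0 = - m1 A B x1"
    by (simp add: eq_neg_iff_add_eq_0)
  then have "m1 A B x0 \<in> morh C A B 0 \<inter> morh C A B 1"
    using odd0 morh_neg[OF assms(1) _ even1] by simp
  then have "m1 A B x0 = 0"
    unfolding morh_Int[OF assms(1)] by simp
  moreover from this sum have "m1 A B x1 = 0"
    by simp
  ultimately show thesis
    by (intro that[OF x]) (simp_all add: cycles_def x0 x1)
qed

lemma cycles_induct [consumes 2, case_names homogeneous add]:
  assumes "x \<in> cycles C A B" and "trans C [A, B]"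
    and homogeneous: "\<And>x d. d < 2 \<Longrightarrow> x \<in> morh C A B d \<Longrightarrow> x \<in> cycles C A B \<Longrightarrow> P x"
    and add: "\<And>x y. x \<in> cycles C A B \<Longrightarrow> y \<in> cycles C A B \<Longrightarrow> P x \<Longrightarrow> P y \<Longrightarrow> P (x + y)"
  shows "P x"
proof -
  obtain x0 x1 where x: "x0 \<in> morh C A B 0" "x1 \<in> morh C A B 1" "x = x0 + x1"
    "x0 \<in> cycles C A B" "x1 \<in> cycles C A B"
    using assms(2,1) by (rule cycles_decomp)
  have "P x0" and "P x1"
    using homogeneous[of 0 x0] homogeneous[of 1 x1] x by simp_all
  then show ?thesis
    using add[OF x(4,5)] x(3) by simp
qed

lemma twist_cycles: "trans C [A, B] \<Longrightarrow> x \<in> cycles C A B \<Longrightarrow> twist A B x \<in> cycles C A B"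
  using twist_m1[of x A B] twist_mor[of A B x] twist_zero[of A B] by (simp add: cycles_def)

lemma twist_bounds:
  assumes "trans C [A, B]" and "b \<in> bounds C A B"
  shows "twist A B b \<in> bounds C A B"
proof -
  obtain x where x: "x \<in> mor C A B" "b = m1 A B x"
    using assms(2) by (rule boundsE)
  have "twist A B b = m1 A B (- twist A B x)"
    using twist_m1[OF x(1) assms(1)] m1_neg[OF assms(1) twist_mor[OF assms(1) x(1)]] x(2) by simp
  then show ?thesis
    using boundsI[OF mor_neg[OF assms(1) twist_mor[OF assms(1) x(1)]]] by simp
qed

lemma scale_sign_twist:
  assumes "trans C [A, B]" and "d < 2" and "x \<in> morh C A B d" and "f (- x) = - f x"
  shows "scl C ((-1) ^ (1 + d)) (f x) = - f (twist A B x)"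
  using assms(2,4) twist_morh[OF assms(1-3)] by (auto simp: less_2_cases_iff)

lemma m1_m2:
  assumes "trans C [A, B, D]" and "x \<in> mor C A B" and "y \<in> mor C B D"
  shows "m1 A D (m2 A B D x y) = m2 A B D (twist A B x) (m1 B D y) - m2 A B D (m1 A B x) y"
proof -
  have AB: "trans C [A, B]" and BD: "trans C [B, D]" and AD: "trans C [A, D]"
    using trans3D[OF assms(1)] by simp_all
  show ?thesis
    using assms(2) AB
  proof (induction rule: mor_induct)
    case (homogeneous x d)
    note x = homogeneous
    have xm: "x \<in> mor C A B"
      by (rule morh_imp_mor[OF AB x])
    show ?case
      using assms(3) BD
    proof (induction rule: mor_induct)
      case (homogeneous y e)
      have ym: "y \<in> mor C B D"
        by (rule morh_imp_mor[OF BD homogeneous])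
      have sign: "scl C ((-1) ^ (1 + d)) (m2 A B D x (m1 B D y)) = - m2 A B D (twist A B x) (m1 B D y)"
        by (rule scale_sign_twist[OF AB x, where f = "\<lambda>u. m2 A B D u (m1 B D y)"])
          (rule m2_neg_left[OF assms(1) xm m1_mor[OF BD ym]])
      have "m2 A B D (m1 A B x) y + m1 A D (m2 A B D x y) - m2 A B D (twist A B x) (m1 B D y) = 0"
        using sign ainf_relation_2[OF assms(1) x(2,1) homogeneous(2,1)] by simp
      then show ?case
        by (simp add: algebra_simps)
    next
      case (add y y')
      then show ?case
        using assms(1) AB BD AD xm
        by (simp add: m1_add m2_add_right m1_mor m2_mor twist_mor algebra_simps)
    qed
  next
    case (add x x')
    then show ?case
      using assms(1,3) AB BD AD
      by (simp add: m1_add m2_add_left m1_mor m2_mor twist_add twist_mor algebra_simps)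
  qed
qed

lemma m2_cycles:
  assumes "trans C [A, B, D]" and "x \<in> cycles C A B" and "y \<in> cycles C B D"
  shows "m2 A B D x y \<in> cycles C A D"
proof -
  have xm: "x \<in> mor C A B" and ym: "y \<in> mor C B D"
    using assms(2,3) by (simp_all add: cycles_mor)
  have "m1 A D (m2 A B D x y) = 0"
    using m2_zero_left[OF assms(1) ym] m2_zero_right[OF assms(1) twist_mor[OF trans3D(1)[OF assms(1)] xm]]
      assms(2,3) m1_m2[OF assms(1) xm ym]
    by (simp add: cycles_def)
  then show ?thesis
    using m2_mor[OF assms(1) xm ym] by (simp add: cycles_def)
qed

lemma m2_cycle_boundary:
  assumes "trans C [A, B, D]" and "x \<in> cycles C A B" and "y \<in> mor C B D"
  shows "m2 A B D x (m1 B D y) \<in> bounds C A D"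
proof -
  have AB: "trans C [A, B]"
    using trans3D[OF assms(1)] by simp
  have xm: "x \<in> mor C A B"
    using assms(2) by (rule cycles_mor)
  have "m1 A D (m2 A B D (twist A B x) y) = m2 A B D x (m1 B D y)"
    using twist_twist[OF AB xm] twist_cycles[OF AB assms(2)] m2_zero_left[OF assms(1,3)]
      m1_m2[OF assms(1) twist_mor[OF AB xm] assms(3)]
    by (simp add: cycles_def)
  then show ?thesis
    using boundsI[OF m2_mor[OF assms(1) twist_mor[OF AB xm] assms(3)]] by simp
qed

lemma m2_boundary_cycle:
  assumes "trans C [A, B, D]" and "y \<in> mor C A B" and "x \<in> cycles C B D"
  shows "m2 A B D (m1 A B y) x \<in> bounds C A D"
proof -
  have AB: "trans C [A, B]" and AD: "trans C [A, D]"
    using trans3D[OF assms(1)] by simp_all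
  have xm: "x \<in> mor C B D"
    using assms(3) by (rule cycles_mor)
  have "m2 A B D (m1 A B y) x = - m1 A D (m2 A B D y x)"
    using m2_zero_right[OF assms(1) twist_mor[OF AB assms(2)]] assms(3) m1_m2[OF assms(1,2) xm]
    by (simp add: cycles_def)
  then show ?thesis
    using bounds_neg[OF AD boundsI[OF m2_mor[OF assms(1,2) xm]]] by simp
qed

lemma m2_assoc_mod_bounds_homogeneous:
  assumes "trans C [A, B, D, E]"
    and x: "x \<in> morh C A B d" "d < 2" "x \<in> cycles C A B"
    and y: "y \<in> morh C B D e" "e < 2" "y \<in> cycles C B D"
    and z: "z \<in> morh C D E f" "f < 2" "z \<in> cycles C D E"
  shows "m2 A D E (m2 A B D x y) z - m2 A B E (twist A B x) (m2 B D E y z) \<in> bounds C A E"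
proof -
  have ABE: "trans C [A, B, E]" and BDE: "trans C [B, D, E]"
    using trans4D[OF assms(1)] by simp_all
  have AB: "trans C [A, B]" and AE: "trans C [A, E]"
    using trans3D[OF ABE] by simp_all
  have xm: "x \<in> mor C A B" and ym: "y \<in> mor C B D" and zm: "z \<in> mor C D E"
    using x(3) y(3) z(3) by (simp_all add: cycles_mor)
  have sign: "scl C ((-1) ^ (1 + d)) (m2 A B E x (m2 B D E y z))
      = - m2 A B E (twist A B x) (m2 B D E y z)"
    by (rule scale_sign_twist[OF AB x(2,1), where f = "\<lambda>u. m2 A B E u (m2 B D E y z)"])
      (rule m2_neg_left[OF ABE xm m2_mor[OF BDE ym zm]])
  have "m2 A D E (m2 A B D x y) z + m1 A E (m3 A B D E x y z)
      - m2 A B E (twist A B x) (m2 B D E y z) = 0"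
    using sign m3_zero[OF assms(1) xm ym zm] x(3) y(3) z(3)
      ainf_relation_3[OF assms(1) x(1,2) y(1,2) z(1,2)]
    by (simp add: cycles_def)
  then have "m2 A D E (m2 A B D x y) z - m2 A B E (twist A B x) (m2 B D E y z)
      = - m1 A E (m3 A B D E x y z)"
    unfolding eq_neg_iff_add_eq_0 by (simp add: algebra_simps)
  then show ?thesis
    using bounds_neg[OF AE boundsI[OF m3_mor[OF assms(1) xm ym zm]]] by simp
qed

lemma m2_assoc_mod_bounds:
  assumes "trans C [A, B, D, E]"
    and "x \<in> cycles C A B" and "y \<in> cycles C B D" and "z \<in> cycles C D E"
  shows "m2 A D E (m2 A B D x y) z - m2 A B E (twist A B x) (m2 B D E y z) \<in> bounds C A E"
proof -
  have ABD: "trans C [A, B, D]" and ABE: "trans C [A, B, E]" and ADE: "trans C [A, D, E]"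
    and BDE: "trans C [B, D, E]"
    using trans4D[OF assms(1)] by simp_all
  have AB: "trans C [A, B]" and BD: "trans C [B, D]" and DE: "trans C [D, E]"
    and AE: "trans C [A, E]"
    using trans3D[OF ABD] trans3D[OF ADE] by simp_all
  note linear = m2_add_left m2_add_right twist_add twist_mor m2_mor cycles_mor
  show ?thesis
    using assms(2) AB
  proof (induction rule: cycles_induct)
    case (homogeneous x d)
    note x = homogeneous
    show ?case
      using assms(3) BD
    proof (induction rule: cycles_induct)
      case (homogeneous y e)
      note y = homogeneous
      show ?case
        using assms(4) DE
      proof (induction rule: cycles_induct)
        case (homogeneous z f)
        then show ?case
          by (intro m2_assoc_mod_bounds_homogeneous[OF assms(1) x(2,1,3) y(2,1,3)])
      next
        case (add z z')
        then show ?case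
          using bounds_add_diff[OF AE add(3,4)] x(3) y(3) ABD ABE ADE BDE AB
          by (simp add: linear)
      qed
    next
      case (add y y')
      then show ?case
        using bounds_add_diff[OF AE add(3,4)] x(3) assms(4) ABD ABE ADE BDE AB
        by (simp add: linear)
    qed
  next
    case (add x x')
    then show ?case
      using bounds_add_diff[OF AE add(3,4)] assms(3,4) ABD ABE ADE BDE AB
      by (simp add: linear)
  qed
qed

definition homology_map :: "'o \<Rightarrow> 'o \<Rightarrow> 'o \<Rightarrow> 'o \<Rightarrow> ('m \<Rightarrow> 'm) \<Rightarrow> bool" where
  "homology_map A B A' B' \<phi> \<longleftrightarrow>
     (\<forall>z\<in>cycles C A B. \<phi> z \<in> cycles C A' B') \<and>
     (\<forall>b\<in>bounds C A B. \<phi> b \<in> bounds C A' B') \<and>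
     (\<forall>x\<in>cycles C A B. \<forall>y\<in>cycles C A B. \<phi> (x - y) = \<phi> x - \<phi> y)"

definition homology_iso :: "'o \<Rightarrow> 'o \<Rightarrow> 'o \<Rightarrow> 'o \<Rightarrow> ('m \<Rightarrow> 'm) \<Rightarrow> bool" where
  "homology_iso A B A' B' \<phi> \<longleftrightarrow> homology_map A B A' B' \<phi> \<and>
     (\<forall>z\<in>cycles C A B. \<phi> z \<in> bounds C A' B' \<longrightarrow> z \<in> bounds C A B) \<and>
     (\<forall>w\<in>cycles C A' B'. \<exists>z\<in>cycles C A B. w - \<phi> z \<in> bounds C A' B')"

lemma homology_map_comp:
  assumes "homology_map A B A' B' \<phi>" and "homology_map A' B' A'' B'' \<psi>"
  shows "homology_map A B A'' B'' (\<lambda>x. \<psi> (\<phi> x))"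
  using assms unfolding homology_map_def by simp

lemma homology_iso_comp:
  assumes "trans C [A'', B'']"
    and "homology_iso A B A' B' \<phi>" and "homology_iso A' B' A'' B'' \<psi>"
  shows "homology_iso A B A'' B'' (\<lambda>x. \<psi> (\<phi> x))"
  unfolding homology_iso_def
proof (intro conjI ballI impI)
  show "homology_map A B A'' B'' (\<lambda>x. \<psi> (\<phi> x))"
    using assms(2,3) unfolding homology_iso_def by (blast intro: homology_map_comp)
next
  fix z
  assume "z \<in> cycles C A B" and "\<psi> (\<phi> z) \<in> bounds C A'' B''"
  then show "z \<in> bounds C A B"
    using assms(2,3) unfolding homology_iso_def homology_map_def by blast
next
  fix w
  assume "w \<in> cycles C A'' B''"
  then obtain u where u: "u \<in> cycles C A' B'" "w - \<psi> u \<in> bounds C A'' B''"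
    using assms(3) unfolding homology_iso_def by blast
  then obtain z where z: "z \<in> cycles C A B" "u - \<phi> z \<in> bounds C A' B'"
    using assms(2) unfolding homology_iso_def by blast
  have "\<psi> (u - \<phi> z) = \<psi> u - \<psi> (\<phi> z)" and "\<psi> (u - \<phi> z) \<in> bounds C A'' B''"
    using assms(2,3) u(1) z unfolding homology_iso_def homology_map_def by blast+
  then have "\<psi> u - \<psi> (\<phi> z) \<in> bounds C A'' B''"
    by simp
  then have "(w - \<psi> u) + (\<psi> u - \<psi> (\<phi> z)) \<in> bounds C A'' B''"
    by (rule bounds_add[OF assms(1) u(2)])
  then show "\<exists>z\<in>cycles C A B. w - \<psi> (\<phi> z) \<in> bounds C A'' B''"
    using z(1) by auto
qed

lemma homology_iso_cong:
  assumes "trans C [A', B']" and "homology_iso A B A' B' \<phi>" and "homology_map A B A' B' \<chi>"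
    and "\<And>z. z \<in> cycles C A B \<Longrightarrow> \<chi> z - \<phi> z \<in> bounds C A' B'"
  shows "homology_iso A B A' B' \<chi>"
  unfolding homology_iso_def
proof (intro conjI ballI impI)
  fix z
  assume z: "z \<in> cycles C A B" and "\<chi> z \<in> bounds C A' B'"
  then have "\<chi> z - (\<chi> z - \<phi> z) \<in> bounds C A' B'"
    using bounds_diff[OF assms(1)] assms(4) by blast
  then show "z \<in> bounds C A B"
    using assms(2) z unfolding homology_iso_def by simp
next
  fix w
  assume "w \<in> cycles C A' B'"
  then obtain z where z: "z \<in> cycles C A B" "w - \<phi> z \<in> bounds C A' B'"
    using assms(2) unfolding homology_iso_def by blast
  then have "(w - \<phi> z) - (\<chi> z - \<phi> z) \<in> bounds C A' B'"
    using bounds_diff[OF assms(1)] assms(4) by blast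
  then show "\<exists>z\<in>cycles C A B. w - \<chi> z \<in> bounds C A' B'"
    using z(1) by auto
qed (fact assms(3))

lemma homology_iso_cancel:
  assumes "trans C [A', B']" and "trans C [A'', B'']"
    and "homology_map A B A' B' F" and "homology_iso A' B' A'' B'' G"
    and "homology_iso A B A'' B'' K"
    and "\<And>z. z \<in> cycles C A B \<Longrightarrow> G (F z) - K z \<in> bounds C A'' B''"
  shows "homology_iso A B A' B' F"
  unfolding homology_iso_def
proof (intro conjI ballI impI)
  fix z
  assume z: "z \<in> cycles C A B" and "F z \<in> bounds C A' B'"
  then have "G (F z) - (G (F z) - K z) \<in> bounds C A'' B''"
    using assms(4,6) bounds_diff[OF assms(2)] unfolding homology_iso_def homology_map_def by blast
  then show "z \<in> bounds C A B"
    using assms(5) z unfolding homology_iso_def by simp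
next
  fix w
  assume w: "w \<in> cycles C A' B'"
  then have "G w \<in> cycles C A'' B''"
    using assms(4) unfolding homology_iso_def homology_map_def by blast
  then obtain z where z: "z \<in> cycles C A B" "G w - K z \<in> bounds C A'' B''"
    using assms(5) unfolding homology_iso_def by blast
  have Fz: "F z \<in> cycles C A' B'"
    using assms(3) z(1) unfolding homology_map_def by blast
  have "G (w - F z) = (G w - K z) - (G (F z) - K z)"
    using assms(4) w Fz unfolding homology_iso_def homology_map_def by simp
  then have "G (w - F z) \<in> bounds C A'' B''"
    using bounds_diff[OF assms(2) z(2) assms(6)[OF z(1)]] by simp
  then have "w - F z \<in> bounds C A' B'"
    using assms(4) cycles_diff[OF assms(1) w Fz] unfolding homology_iso_def by blast
  then show "\<exists>z\<in>cycles C A B. w - F z \<in> bounds C A' B'"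
    using z(1) by auto
qed (fact assms(3))

lemma homology_iso_twist:
  assumes "trans C [A, B]"
  shows "homology_iso A B A B (twist A B)"
  unfolding homology_iso_def homology_map_def
proof (intro conjI ballI impI)
  fix z
  assume z: "z \<in> cycles C A B"
  then show "twist A B z \<in> cycles C A B"
    by (rule twist_cycles[OF assms])
  assume "twist A B z \<in> bounds C A B"
  then show "z \<in> bounds C A B"
    using twist_bounds[OF assms] twist_twist[OF assms cycles_mor[OF z]] by metis
next
  fix b
  assume "b \<in> bounds C A B"
  then show "twist A B b \<in> bounds C A B"
    by (rule twist_bounds[OF assms])
next
  fix x y
  assume "x \<in> cycles C A B" and "y \<in> cycles C A B"
  then show "twist A B (x - y) = twist A B x - twist A B y"
    by (intro twist_diff[OF assms] cycles_mor)
next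
  fix w
  assume w: "w \<in> cycles C A B"
  then have "w - twist A B (twist A B w) \<in> bounds C A B"
    using twist_twist[OF assms cycles_mor[OF w]] bounds_zero[OF assms] by simp
  then show "\<exists>z\<in>cycles C A B. w - twist A B z \<in> bounds C A B"
    using twist_cycles[OF assms w] by blast
qed

lemma hclass_eq_iff:
  assumes "trans C [A, B]"
  shows "hclass C A B u = hclass C A B v \<longleftrightarrow> u - v \<in> bounds C A B"
proof
  assume "hclass C A B u = hclass C A B v"
  moreover have "u \<in> hclass C A B u"
    unfolding hclass_def using bounds_zero[OF assms] by force
  ultimately obtain b where "b \<in> bounds C A B" and "u = v + b"
    unfolding hclass_def by auto
  then show "u - v \<in> bounds C A B"
    by simp
next
  assume uv: "u - v \<in> bounds C A B"
  have "u + b \<in> hclass C A B v" if "b \<in> bounds C A B" for b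
  proof -
    have "u + b = v + ((u - v) + b)"
      by simp
    then show ?thesis
      unfolding hclass_def using bounds_add[OF assms uv that] by blast
  qed
  moreover have "v + b \<in> hclass C A B u" if "b \<in> bounds C A B" for b
  proof -
    have "v + b = u + (b - (u - v))"
      by simp
    then show ?thesis
      unfolding hclass_def using bounds_diff[OF assms that uv] by blast
  qed
  ultimately show "hclass C A B u = hclass C A B v"
    unfolding hclass_def by blast
qed

lemma hclass_induced_map:
  assumes "trans C [A, B]" and "trans C [A', B']" and "homology_map A B A' B' \<phi>"
    and "z \<in> cycles C A B"
  shows "hclass C A' B' (\<phi> (SOME x. x \<in> hclass C A B z)) = hclass C A' B' (\<phi> z)"
proof -
  let ?s = "SOME x. x \<in> hclass C A B z"
  have "z \<in> hclass C A B z"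
    unfolding hclass_def using bounds_zero[OF assms(1)] by force
  then have "?s \<in> hclass C A B z"
    by (rule someI)
  then obtain b where b: "b \<in> bounds C A B" and s: "?s = z + b"
    unfolding hclass_def by blast
  have "?s \<in> cycles C A B"
    unfolding s by (rule cycles_add[OF assms(1,4) bounds_cycles[OF assms(1) b]])
  then have "\<phi> ?s - \<phi> z = \<phi> b"
    using assms(3,4) s unfolding homology_map_def by (metis add_diff_cancel_left')
  then have "\<phi> ?s - \<phi> z \<in> bounds C A' B'"
    using assms(3) b unfolding homology_map_def by simp
  then show ?thesis
    using hclass_eq_iff[OF assms(2)] by blast
qed

lemma induces_iso_imp_homology_iso:
  assumes "trans C [A, B]" and "trans C [A', B']" and "homology_map A B A' B' \<phi>"
    and "induces_iso C A B A' B' \<phi>"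
  shows "homology_iso A B A' B' \<phi>"
proof -
  let ?f = "\<lambda>c. hclass C A' B' (\<phi> (SOME x. x \<in> c))"
  have bij: "bij_betw ?f (homology C A B) (homology C A' B')"
    using assms(4) unfolding induces_iso_def by blast
  have f: "?f (hclass C A B z) = hclass C A' B' (\<phi> z)" if "z \<in> cycles C A B" for z
    by (rule hclass_induced_map[OF assms(1-3) that])
  have "\<phi> 0 = 0"
    using assms(3) cycles_zero[OF assms(1)] unfolding homology_map_def by force
  show ?thesis
    unfolding homology_iso_def
  proof (intro conjI ballI impI)
    fix z
    assume z: "z \<in> cycles C A B" and "\<phi> z \<in> bounds C A' B'"
    have "?f (hclass C A B z) = hclass C A' B' (\<phi> z)"
      by (rule f[OF z])
    also have "\<dots> = hclass C A' B' (\<phi> 0)"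
      using hclass_eq_iff[OF assms(2)] \<open>\<phi> z \<in> bounds C A' B'\<close> \<open>\<phi> 0 = 0\<close> by simp
    also have "\<dots> = ?f (hclass C A B 0)"
      by (rule f[OF cycles_zero[OF assms(1)], symmetric])
    finally have "?f (hclass C A B z) = ?f (hclass C A B 0)" .
    moreover have "hclass C A B z \<in> homology C A B" and "hclass C A B 0 \<in> homology C A B"
      unfolding homology_def using z cycles_zero[OF assms(1)] by auto
    ultimately have "hclass C A B z = hclass C A B 0"
      using bij unfolding bij_betw_def inj_on_def by blast
    then show "z \<in> bounds C A B"
      using hclass_eq_iff[OF assms(1)] by simp
  next
    fix w
    assume "w \<in> cycles C A' B'"
    then have "hclass C A' B' w \<in> ?f ` homology C A B"
      using bij unfolding bij_betw_def homology_def by auto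
    then obtain z where z: "z \<in> cycles C A B" and "hclass C A' B' w = hclass C A' B' (\<phi> z)"
      unfolding homology_def using f by auto
    then show "\<exists>z\<in>cycles C A B. w - \<phi> z \<in> bounds C A' B'"
      using hclass_eq_iff[OF assms(2)] by blast
  qed (fact assms(3))
qed

lemma homology_iso_imp_induces_iso:
  assumes "trans C [A, B]" and "trans C [A', B']" and "homology_iso A B A' B' \<phi>"
  shows "induces_iso C A B A' B' \<phi>"
proof -
  let ?f = "\<lambda>c. hclass C A' B' (\<phi> (SOME x. x \<in> c))"
  have map: "homology_map A B A' B' \<phi>"
    using assms(3) unfolding homology_iso_def by blast
  have f: "?f (hclass C A B z) = hclass C A' B' (\<phi> z)" if "z \<in> cycles C A B" for z
    by (rule hclass_induced_map[OF assms(1,2) map that])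
  have "inj_on ?f (homology C A B)"
  proof (rule inj_onI)
    fix c c'
    assume "c \<in> homology C A B" and "c' \<in> homology C A B" and "?f c = ?f c'"
    then obtain z z' where z: "z \<in> cycles C A B" "c = hclass C A B z"
      and z': "z' \<in> cycles C A B" "c' = hclass C A B z'"
      and "hclass C A' B' (\<phi> z) = hclass C A' B' (\<phi> z')"
      unfolding homology_def using f by auto
    then have "\<phi> (z - z') \<in> bounds C A' B'"
      using map hclass_eq_iff[OF assms(2)] unfolding homology_map_def by simp
    then have "z - z' \<in> bounds C A B"
      using assms(3) cycles_diff[OF assms(1) z(1) z'(1)] unfolding homology_iso_def by blast
    then show "c = c'"
      using z(2) z'(2) hclass_eq_iff[OF assms(1)] by simp
  qed
  moreover have "?f ` homology C A B = homology C A' B'"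
  proof
    show "?f ` homology C A B \<subseteq> homology C A' B'"
      using map f unfolding homology_def homology_map_def by auto
  next
    show "homology C A' B' \<subseteq> ?f ` homology C A B"
    proof
      fix c
      assume "c \<in> homology C A' B'"
      then obtain w where w: "w \<in> cycles C A' B'" "c = hclass C A' B' w"
        unfolding homology_def by auto
      then obtain z where z: "z \<in> cycles C A B" "w - \<phi> z \<in> bounds C A' B'"
        using assms(3) unfolding homology_iso_def by blast
      then have "c = hclass C A' B' (\<phi> z)"
        using w(2) hclass_eq_iff[OF assms(2)] by simp
      also have "\<dots> = ?f (hclass C A B z)"
        by (rule f[OF z(1), symmetric])
      finally show "c \<in> ?f ` homology C A B"
        unfolding homology_def using z(1) by auto
    qed
  qed
  ultimately show ?thesis
    using map unfolding induces_iso_def bij_betw_def homology_map_def by blast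
qed

lemma homology_map_m2_fst:
  assumes "trans C [A, B, D]" and "e \<in> cycles C A B"
  shows "homology_map B D A D (\<lambda>x. m2 A B D e x)"
  unfolding homology_map_def
proof (intro conjI ballI)
  fix z
  assume "z \<in> cycles C B D"
  then show "m2 A B D e z \<in> cycles C A D"
    by (rule m2_cycles[OF assms])
next
  fix b
  assume "b \<in> bounds C B D"
  then obtain y where "y \<in> mor C B D" and "b = m1 B D y"
    by (rule boundsE)
  then show "m2 A B D e b \<in> bounds C A D"
    using m2_cycle_boundary[OF assms] by simp
next
  fix x y
  assume "x \<in> cycles C B D" and "y \<in> cycles C B D"
  then show "m2 A B D e (x - y) = m2 A B D e x - m2 A B D e y"
    by (intro m2_diff_right[OF assms(1) cycles_mor[OF assms(2)]] cycles_mor)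
qed

lemma homology_map_m2_snd:
  assumes "trans C [A, B, D]" and "f \<in> cycles C B D"
  shows "homology_map A B A D (\<lambda>x. m2 A B D x f)"
  unfolding homology_map_def
proof (intro conjI ballI)
  fix z
  assume "z \<in> cycles C A B"
  then show "m2 A B D z f \<in> cycles C A D"
    using m2_cycles[OF assms(1) _ assms(2)] by blast
next
  fix b
  assume "b \<in> bounds C A B"
  then obtain y where "y \<in> mor C A B" and "b = m1 A B y"
    by (rule boundsE)
  then show "m2 A B D b f \<in> bounds C A D"
    using m2_boundary_cycle[OF assms(1) _ assms(2)] by simp
next
  fix x y
  assume "x \<in> cycles C A B" and "y \<in> cycles C A B"
  then show "m2 A B D (x - y) f = m2 A B D x f - m2 A B D y f"
    by (intro m2_diff_left[OF assms(1) _ _ cycles_mor[OF assms(2)]] cycles_mor)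
qed

lemma quasi_iso_cycles: "quasi_iso C A A' f \<Longrightarrow> f \<in> cycles C A A'"
  unfolding quasi_iso_def cycles_def by simp

lemma homology_iso_m2_quasi_iso_fst:
  assumes "quasi_iso C A A' f" and "trans C [A, A', B']"
  shows "homology_iso A' B' A B' (\<lambda>x. m2 A A' B' f x)"
proof (rule induces_iso_imp_homology_iso)
  show "trans C [A', B']" and "trans C [A, B']"
    using trans3D[OF assms(2)] by simp_all
  show "homology_map A' B' A B' (\<lambda>x. m2 A A' B' f x)"
    by (rule homology_map_m2_fst[OF assms(2) quasi_iso_cycles[OF assms(1)]])
  show "induces_iso C A' B' A B' (\<lambda>x. m2 A A' B' f x)"
    using assms unfolding quasi_iso_def by blast
qed

lemma homology_iso_m2_quasi_iso_snd:
  assumes "quasi_iso C A A' f" and "trans C [B, A, A']"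
  shows "homology_iso B A B A' (\<lambda>x. m2 B A A' x f)"
proof (rule induces_iso_imp_homology_iso)
  show "trans C [B, A]" and "trans C [B, A']"
    using trans3D[OF assms(2)] by simp_all
  show "homology_map B A B A' (\<lambda>x. m2 B A A' x f)"
    by (rule homology_map_m2_snd[OF assms(2) quasi_iso_cycles[OF assms(1)]])
  show "induces_iso C B A B A' (\<lambda>x. m2 B A A' x f)"
    using assms unfolding quasi_iso_def by blast
qed

lemma homology_iso_m2_twist:
  assumes "trans C [A, B, D]" and "e \<in> cycles C A B"
    and "homology_iso B D A D (\<lambda>x. m2 A B D e x)"
  shows "homology_iso B D A D (\<lambda>x. m2 A B D (twist A B e) x)"
proof -
  have AB: "trans C [A, B]" and BD: "trans C [B, D]" and AD: "trans C [A, D]"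
    using trans3D[OF assms(1)] by simp_all
  have "homology_iso B D A D (\<lambda>x. twist A D (m2 A B D e (twist B D x)))"
    using homology_iso_comp[OF AD homology_iso_comp[OF AD homology_iso_twist[OF BD] assms(3)]
        homology_iso_twist[OF AD]] .
  then show ?thesis
  proof (rule homology_iso_cong[OF AD])
    show "homology_map B D A D (\<lambda>x. m2 A B D (twist A B e) x)"
      by (rule homology_map_m2_fst[OF assms(1) twist_cycles[OF AB assms(2)]])
  next
    fix z
    assume "z \<in> cycles C B D"
    then have "m2 A B D (twist A B e) z = twist A D (m2 A B D e (twist B D z))"
      using twist_m2[OF assms(1) cycles_mor[OF assms(2)] twist_mor[OF BD cycles_mor]]
        twist_twist[OF BD cycles_mor] by simp
    then show "m2 A B D (twist A B e) z - twist A D (m2 A B D e (twist B D z)) \<in> bounds C A D"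
      using bounds_zero[OF AD] by simp
  qed
qed

lemma homology_iso_m2_comp_fst:
  assumes "trans C [A1, A2, A3, X]" and "quasi_iso C A1 A2 e12" and "quasi_iso C A2 A3 e23"
  shows "homology_iso A3 X A1 X (\<lambda>x. m2 A1 A3 X (m2 A1 A2 A3 e12 e23) x)"
proof -
  have t123: "trans C [A1, A2, A3]" and t12X: "trans C [A1, A2, X]"
    and t13X: "trans C [A1, A3, X]" and t23X: "trans C [A2, A3, X]"
    using trans4D[OF assms(1)] by simp_all
  have c12: "e12 \<in> cycles C A1 A2" and c23: "e23 \<in> cycles C A2 A3"
    using assms(2,3) by (simp_all add: quasi_iso_cycles)
  have "homology_iso A3 X A1 X (\<lambda>x. m2 A1 A2 X (twist A1 A2 e12) (m2 A2 A3 X e23 x))"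
    using homology_iso_comp[OF trans3D(3)[OF t12X]
        homology_iso_m2_quasi_iso_fst[OF assms(3) t23X]
        homology_iso_m2_twist[OF t12X c12 homology_iso_m2_quasi_iso_fst[OF assms(2) t12X]]] .
  then show ?thesis
  proof (rule homology_iso_cong[OF trans3D(3)[OF t13X]])
    show "homology_map A3 X A1 X (\<lambda>x. m2 A1 A3 X (m2 A1 A2 A3 e12 e23) x)"
      by (rule homology_map_m2_fst[OF t13X m2_cycles[OF t123 c12 c23]])
  qed (rule m2_assoc_mod_bounds[OF assms(1) c12 c23])
qed

lemma homology_iso_m2_comp_snd:
  assumes "trans C [X, A1, A2, A3]" and "quasi_iso C A1 A2 e12" and "quasi_iso C A2 A3 e23"
  shows "homology_iso X A1 X A3 (\<lambda>x. m2 X A1 A3 x (m2 A1 A2 A3 e12 e23))"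
proof -
  have tX12: "trans C [X, A1, A2]" and tX13: "trans C [X, A1, A3]"
    and tX23: "trans C [X, A2, A3]" and t123: "trans C [A1, A2, A3]"
    using trans4D[OF assms(1)] by simp_all
  have X1: "trans C [X, A1]" and X2: "trans C [X, A2]" and X3: "trans C [X, A3]"
    using trans3D[OF tX12] trans3D[OF tX13] by simp_all
  have c12: "e12 \<in> cycles C A1 A2" and c23: "e23 \<in> cycles C A2 A3"
    using assms(2,3) by (simp_all add: quasi_iso_cycles)
  have "homology_iso X A1 X A3 (\<lambda>x. m2 X A2 A3 (m2 X A1 A2 (twist X A1 x) e12) e23)"
    using homology_iso_comp[OF X3 homology_iso_comp[OF X2 homology_iso_twist[OF X1]
        homology_iso_m2_quasi_iso_snd[OF assms(2) tX12]]
        homology_iso_m2_quasi_iso_snd[OF assms(3) tX23]] .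
  then show ?thesis
  proof (rule homology_iso_cong[OF X3])
    show "homology_map X A1 X A3 (\<lambda>x. m2 X A1 A3 x (m2 A1 A2 A3 e12 e23))"
      by (rule homology_map_m2_snd[OF tX13 m2_cycles[OF t123 c12 c23]])
  next
    fix x
    assume x: "x \<in> cycles C X A1"
    have "m2 X A2 A3 (m2 X A1 A2 (twist X A1 x) e12) e23 - m2 X A1 A3 x (m2 A1 A2 A3 e12 e23)
        \<in> bounds C X A3"
      using m2_assoc_mod_bounds[OF assms(1) twist_cycles[OF X1 x] c12 c23]
        twist_twist[OF X1 cycles_mor[OF x]]
      by simp
    then show "m2 X A1 A3 x (m2 A1 A2 A3 e12 e23) - m2 X A2 A3 (m2 X A1 A2 (twist X A1 x) e12) e23
        \<in> bounds C X A3"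
      by (rule bounds_diff_commute[OF X3])
  qed
qed

lemma homology_iso_m2_fst_transfer:
  assumes "trans C [A, B, D, E]" and "e \<in> cycles C A B" and "quasi_iso C D E h"
    and "homology_iso B E A E (\<lambda>x. m2 A B E e x)"
  shows "homology_iso B D A D (\<lambda>x. m2 A B D e x)"
proof -
  have ABD: "trans C [A, B, D]" and ABE: "trans C [A, B, E]" and ADE: "trans C [A, D, E]"
    and BDE: "trans C [B, D, E]"
    using trans4D[OF assms(1)] by simp_all
  have AD: "trans C [A, D]" and AE: "trans C [A, E]"
    using trans3D[OF ADE] by simp_all
  have "homology_iso B D A E (\<lambda>x. m2 A B E (twist A B e) (m2 B D E x h))"
    using homology_iso_comp[OF AE homology_iso_m2_quasi_iso_snd[OF assms(3) BDE]
        homology_iso_m2_twist[OF ABE assms(2,4)]] .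
  then show ?thesis
  proof (rule homology_iso_cancel[OF AD AE homology_map_m2_fst[OF ABD assms(2)]
        homology_iso_m2_quasi_iso_snd[OF assms(3) ADE]])
    fix z
    assume "z \<in> cycles C B D"
    then show "m2 A D E (m2 A B D e z) h - m2 A B E (twist A B e) (m2 B D E z h) \<in> bounds C A E"
      by (rule m2_assoc_mod_bounds[OF assms(1,2) _ quasi_iso_cycles[OF assms(3)]])
  qed
qed

lemma homology_iso_m2_snd_transfer:
  assumes "trans C [E, D, A, B]" and "f \<in> cycles C A B" and "quasi_iso C E D g"
    and "homology_iso E A E B (\<lambda>x. m2 E A B x f)"
  shows "homology_iso D A D B (\<lambda>x. m2 D A B x f)"
proof -
  have EDA: "trans C [E, D, A]" and EDB: "trans C [E, D, B]" and DAB: "trans C [D, A, B]"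
    using trans4D[OF assms(1)] by simp_all
  have ED: "trans C [E, D]" and DB: "trans C [D, B]" and EB: "trans C [E, B]"
    using trans3D[OF EDA] trans3D[OF EDB] by simp_all
  have g: "g \<in> cycles C E D"
    using assms(3) by (rule quasi_iso_cycles)
  have "homology_iso D A E B (\<lambda>x. m2 E A B (m2 E D A (twist E D g) x) f)"
    using homology_iso_comp[OF EB
        homology_iso_m2_twist[OF EDA g homology_iso_m2_quasi_iso_fst[OF assms(3) EDA]]
        assms(4)] .
  then show ?thesis
  proof (rule homology_iso_cancel[OF DB EB homology_map_m2_snd[OF DAB assms(2)]
        homology_iso_m2_quasi_iso_fst[OF assms(3) EDB]])
    fix x
    assume x: "x \<in> cycles C D A"
    have "m2 E A B (m2 E D A (twist E D g) x) f - m2 E D B g (m2 D A B x f) \<in> bounds C E B"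
      using m2_assoc_mod_bounds[OF assms(1) twist_cycles[OF ED g] x assms(2)]
        twist_twist[OF ED cycles_mor[OF g]]
      by simp
    then show "m2 E D B g (m2 D A B x f) - m2 E A B (m2 E D A (twist E D g) x) f \<in> bounds C E B"
      by (rule bounds_diff_commute[OF EB])
  qed
qed

lemma induces_iso_m2_comp_fst:
  assumes "unital C" and "trans C [A1, A2, A3]"
    and "quasi_iso C A1 A2 e12" and "quasi_iso C A2 A3 e23" and "trans C [A1, A3, B']"
  shows "induces_iso C A3 B' A1 B' (\<lambda>x. m2 A1 A3 B' (m2 A1 A2 A3 e12 e23) x)"
proof -
  obtain Am Ap g h where "quasi_iso C Am B' g" and h: "quasi_iso C B' Ap h"
    and t1: "trans C (Am # [A1, A2, A3] @ [Ap])" and t2: "trans C (Am # [A1, A3, B'] @ [Ap])"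
    by (rule unitalE[OF assms(1,2,5)])
  have t123p: "trans C [A1, A2, A3, Ap]" and t13bp: "trans C [A1, A3, B', Ap]"
    using trans_tl[OF t1] trans_tl[OF t2] by simp_all
  have "homology_iso A3 B' A1 B' (\<lambda>x. m2 A1 A3 B' (m2 A1 A2 A3 e12 e23) x)"
    by (rule homology_iso_m2_fst_transfer[OF t13bp _ h
          homology_iso_m2_comp_fst[OF t123p assms(3,4)]])
      (rule m2_cycles[OF assms(2) assms(3,4)[THEN quasi_iso_cycles]])
  then show ?thesis
    using homology_iso_imp_induces_iso trans3D[OF assms(5)] by blast
qed

lemma induces_iso_m2_comp_snd:
  assumes "unital C" and "trans C [A1, A2, A3]"
    and "quasi_iso C A1 A2 e12" and "quasi_iso C A2 A3 e23" and "trans C [B, A1, A3]"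
  shows "induces_iso C B A1 B A3 (\<lambda>x. m2 B A1 A3 x (m2 A1 A2 A3 e12 e23))"
proof -
  obtain Am Ap g h where g: "quasi_iso C Am B g" and "quasi_iso C B Ap h"
    and t1: "trans C (Am # [A1, A2, A3] @ [Ap])" and t2: "trans C (Am # [B, A1, A3] @ [Ap])"
    by (rule unitalE[OF assms(1,2,5)])
  have tm123: "trans C [Am, A1, A2, A3]" and tmb13: "trans C [Am, B, A1, A3]"
    using trans_butlast[of "Am # [A1, A2, A3]"] trans_butlast[of "Am # [B, A1, A3]"] t1 t2
    by simp_all
  have "homology_iso B A1 B A3 (\<lambda>x. m2 B A1 A3 x (m2 A1 A2 A3 e12 e23))"
    by (rule homology_iso_m2_snd_transfer[OF tmb13 _ g
          homology_iso_m2_comp_snd[OF tm123 assms(3,4)]])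
      (rule m2_cycles[OF assms(2) assms(3,4)[THEN quasi_iso_cycles]])
  then show ?thesis
    using homology_iso_imp_induces_iso trans3D[OF assms(5)] by blast
qed

end

theorem mainTheorem15:
  fixes C :: "('o, 'k::field, 'm::ab_group_add) ainf_pre"
    and A1 A2 A3 :: 'o and e12 e23 :: 'm
  assumes "ainf_precat C"
    and "unital C"
    and "trans C [A1, A2, A3]"
    and "quasi_iso C A1 A2 e12"
    and "quasi_iso C A2 A3 e23"
  shows "quasi_iso C A1 A3 (mu C [A1, A2, A3] [e12, e23])"
proof -
  interpret ainf_precategory C
    using assms(1) by (rule ainf_precategory.intro)
  have "mu C [A1, A2, A3] [e12, e23] \<in> cycles C A1 A3"
    by (rule m2_cycles[OF assms(3) assms(4,5)[THEN quasi_iso_cycles]])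
  then show ?thesis
    unfolding quasi_iso_def
    using trans3D(3)[OF assms(3)]
      induces_iso_m2_comp_fst[OF assms(2-5)] induces_iso_m2_comp_snd[OF assms(2-5)]
    by (simp add: cycles_def)
qed

end
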